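(* For every positive integer $n$ and every $t\in\{1,2,3\}$, $$M(n,t)\le \sum_{\mathbf{x}\in\{0,1\}^n}\frac{1}{|\Phi_t(\mathbf{x})|}.$$
   Context: A grain pattern of length $n$ is a subset $E\subseteq\{2,\dots,n\}$ containing no two consecutive integers. For such $E$, the map $\phi_E:\{0,1\}^n\to\{0,1\}^n$ sends $\mathbf{x}=(x_1,\dots,x_n)$ to $\mathbf{y}$ with $y_j=x_{j-1}$ if $j\in E$ and $y_j=x_j$ otherwise. For $t\ge0$, $\mathcal{E}_{n,t}$ is the set of grain patterns of length $n$ with $|E|\le t$, and $\Phi_t(\mathbf{x})=\{\phi_E(\mathbf{x}):E\in\mathcal{E}_{n,t}\}$. Two words $\mathbf{x}_1,\mathbf{x}_2$ are $t$-confusable if $\Phi_t(\mathbf{x}_1)\cap\Phi_t(\mathbf{x}_2)\ne\emptyset$. A code $\mathcal{C}\subseteq\{0,1\}^n$ is $t$-grain-correcting if no two distinct codewords are $t$-confusable. $M(n,t)$ is the maximum cardinality of a $t$-grain-correcting code of length $n$. *)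

theory Defs
  imports Complex_Main
begin

text \<open>Binary words of length n are bool lists of length n; position j (1-based) is xs ! (j - 1).\<close>

definition words :: "nat \<Rightarrow> bool list set" where
  "words n = {xs. length xs = n}"

definition grain_pattern :: "nat \<Rightarrow> nat set \<Rightarrow> bool" where
  "grain_pattern n E \<longleftrightarrow> E \<subseteq> {2..n} \<and> (\<forall>j\<in>E. Suc j \<notin> E)"

definition phi :: "nat \<Rightarrow> nat set \<Rightarrow> bool list \<Rightarrow> bool list" where
  "phi n E x = map (\<lambda>j. if j \<in> E then x ! (j - 2) else x ! (j - 1)) [1..<Suc n]"

definition grain_patterns :: "nat \<Rightarrow> nat \<Rightarrow> nat set set" where
  "grain_patterns n t = {E. grain_pattern n E \<and> card E \<le> t}"

definition Phi :: "nat \<Rightarrow> nat \<Rightarrow> bool list \<Rightarrow> bool list set" where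
  "Phi n t x = {phi n E x | E. E \<in> grain_patterns n t}"

definition confusable :: "nat \<Rightarrow> nat \<Rightarrow> bool list \<Rightarrow> bool list \<Rightarrow> bool" where
  "confusable n t x1 x2 \<longleftrightarrow> Phi n t x1 \<inter> Phi n t x2 \<noteq> {}"

definition grain_correcting :: "nat \<Rightarrow> nat \<Rightarrow> bool list set \<Rightarrow> bool" where
  "grain_correcting n t C \<longleftrightarrow> C \<subseteq> words n \<and>
     (\<forall>x1\<in>C. \<forall>x2\<in>C. x1 \<noteq> x2 \<longrightarrow> \<not> confusable n t x1 x2)"

definition M :: "nat \<Rightarrow> nat \<Rightarrow> nat" where
  "M n t = Max {card C | C. grain_correcting n t C}"

end

theory Submission
  imports Defs
begin

(*
  A grain-correcting code has pairwise disjoint error balls Phi(x), so its size is at most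
  the sum of 1/|Phi(y)| over all words y once every ball satisfies
  sum_{y in Phi(x)} 1/|Phi(y)| >= 1.

  Only the positions where x changes value matter: if B is the transition set of x, then
  Phi(x) is in bijection with the N sparse subsets D of B of size at most t, and the
  transition set of phi_D(x) lies in (B - D - (D+1)) u ((D+1) - B).  An explicit injection of
  the pairs (D, D'), D' a sparse subset of that set, into pairs of sparse subsets of B gives
  sum_D |Phi(phi_D(x))| <= N^2, and then sum_D 1/|Phi(phi_D(x))| >= N^2 / N^2 = 1 by the
  harmonic-arithmetic mean inequality.  Nothing in the argument needs n >= 1 or t <= 3.
*)

lemma one_le_sum_inverse:
  fixes a :: "'a \<Rightarrow> real"
  assumes "finite I" "I \<noteq> {}" and pos: "\<And>i. i \<in> I \<Longrightarrow> a i > 0"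
    and sum_le: "sum a I \<le> real (card I) ^ 2"
  shows "1 \<le> (\<Sum>i\<in>I. 1 / a i)"
proof -
  define N where "N = real (card I)"
  have N: "N > 0" using assms(1,2) by (simp add: N_def card_gt_0_iff)
  \<comment> \<open>the tangent line of \<open>1/a\<close> at \<open>a = N\<close>\<close>
  have tangent: "2 / N - a i / N ^ 2 \<le> 1 / a i" if "i \<in> I" for i
  proof -
    have ai: "a i > 0" using pos that .
    have "2 * a i * N - a i ^ 2 \<le> N ^ 2"
      using zero_le_power2[of "N - a i"] by (simp add: power2_eq_square algebra_simps)
    then show ?thesis using ai N by (simp add: field_simps power2_eq_square)
  qed
  have "2 - sum a I / N ^ 2 = (\<Sum>i\<in>I. 2 / N - a i / N ^ 2)"
    using N by (simp add: sum_subtractf sum_divide_distrib N_def)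
  also have "\<dots> \<le> (\<Sum>i\<in>I. 1 / a i)" by (rule sum_mono) (rule tangent)
  finally have "2 - sum a I / N ^ 2 \<le> (\<Sum>i\<in>I. 1 / a i)" .
  moreover have "sum a I / N ^ 2 \<le> 1" using sum_le N by (simp add: N_def)
  ultimately show ?thesis by linarith
qed

definition sparse :: "nat set \<Rightarrow> bool" where
  "sparse D \<longleftrightarrow> (\<forall>j\<in>D. Suc j \<notin> D)"

definition sparse_subsets :: "nat \<Rightarrow> nat set \<Rightarrow> nat set set" where
  "sparse_subsets t B = {D. D \<subseteq> B \<and> sparse D \<and> card D \<le> t}"

lemma finite_sparse_subsets: "finite B \<Longrightarrow> finite (sparse_subsets t B)"
  unfolding sparse_subsets_def by (rule finite_subset[of _ "Pow B"]) auto

lemma card_sparse_subsets_mono: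
  "finite B' \<Longrightarrow> B \<subseteq> B' \<Longrightarrow> card (sparse_subsets t B) \<le> card (sparse_subsets t B')"
  by (rule card_mono) (auto simp: finite_sparse_subsets sparse_subsets_def)

lemma card_sparse_subsets_pos:
  assumes "finite B" shows "0 < card (sparse_subsets t B)"
proof -
  have "{} \<in> sparse_subsets t B" by (simp add: sparse_subsets_def sparse_def)
  then show ?thesis using finite_sparse_subsets[OF assms] card_gt_0_iff by blast
qed

definition grain_transitions :: "nat set \<Rightarrow> nat set \<Rightarrow> nat set" where
  "grain_transitions B D = (B - D - Suc ` D) \<union> (Suc ` D - B)"

lemma finite_grain_transitions: "finite B \<Longrightarrow> finite D \<Longrightarrow> finite (grain_transitions B D)"
  unfolding grain_transitions_def by simp

(* Folding D' back along D (j + 1 with j in D becomes j) gives a subset F of B from which D'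
   is recovered once D is known.  F fails to be sparse exactly at the conflicts j in D with
   j - 1 in F and j + 1 in D'; lowering each conflict to j - 1 in D and deleting j - 1 from F
   repairs this, and the conflicts reappear as the e in the new F with e - 1 in the new D. *)
definition encode :: "nat set \<Rightarrow> nat set \<times> nat set \<Rightarrow> nat set \<times> nat set" where
  "encode B = (\<lambda>(D, D').
     let A = B - D - Suc ` D;
         X = {j\<in>D. j - 1 \<in> D' \<inter> A \<and> Suc j \<in> D'};
         F = (D' \<inter> A) \<union> (\<lambda>k. k - 1) ` (D' - A)
     in ((D - X) \<union> (\<lambda>j. j - 1) ` X, F - (\<lambda>j. j - 1) ` X))"

definition decode :: "nat set \<Rightarrow> nat set \<times> nat set \<Rightarrow> nat set \<times> nat set" where
  "decode B = (\<lambda>(D1, E).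
     let X = {e\<in>E. e - 1 \<in> D1};
         D = (D1 - (\<lambda>j. j - 1) ` X) \<union> X;
         F = E \<union> (\<lambda>j. j - 1) ` X
     in (D, (F \<inter> (B - D - Suc ` D)) \<union> Suc ` (F \<inter> D)))"

locale pattern_pair =
  fixes B D D' :: "nat set"
  assumes finite_B: "finite B" and zero_notin_B: "0 \<notin> B"
    and D_subset: "D \<subseteq> B" and sparse_D: "sparse D"
    and D'_subset: "D' \<subseteq> grain_transitions B D" and sparse_D': "sparse D'"
begin

definition untouched :: "nat set" where
  "untouched = B - D - Suc ` D"

definition conflicts :: "nat set" where
  "conflicts = {j\<in>D. j - 1 \<in> D' \<inter> untouched \<and> Suc j \<in> D'}"

definition folded :: "nat set" where
  "folded = (D' \<inter> untouched) \<union> (\<lambda>k. k - 1) ` (D' - untouched)"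

definition moved :: "nat set" where
  "moved = (D - conflicts) \<union> (\<lambda>j. j - 1) ` conflicts"

definition trimmed :: "nat set" where
  "trimmed = folded - (\<lambda>j. j - 1) ` conflicts"

lemma encode_eq: "encode B (D, D') = (moved, trimmed)"
  unfolding encode_def moved_def trimmed_def folded_def conflicts_def untouched_def Let_def
  by simp

lemma untouched_inter_D: "untouched \<inter> D = {}"
  unfolding untouched_def by auto

lemma D_eq_Suc_pred: "j \<in> D \<Longrightarrow> j = Suc (j - 1)"
  using D_subset zero_notin_B by (cases j) auto

lemma D'_not_untouched:
  assumes "k \<in> D'" "k \<notin> untouched"
  shows "k - 1 \<in> D" "k = Suc (k - 1)" "k \<notin> B"
  using assms D'_subset unfolding untouched_def grain_transitions_def by auto

lemma conflicts_subset_D: "conflicts \<subseteq> D"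
  unfolding conflicts_def by auto

lemma lowered_conflicts_subset: "(\<lambda>j. j - 1) ` conflicts \<subseteq> untouched \<inter> D'"
  unfolding conflicts_def by auto

lemma folded_subset_B: "folded \<subseteq> B"
proof
  fix x assume "x \<in> folded"
  then consider "x \<in> untouched" | k where "k \<in> D'" "k \<notin> untouched" "x = k - 1"
    unfolding folded_def by auto
  then show "x \<in> B"
    using D'_not_untouched(1) D_subset unfolding untouched_def by cases auto
qed

lemma folded_inter_D: "k \<in> folded \<Longrightarrow> k \<in> D \<Longrightarrow> Suc k \<in> D'"
proof -
  assume "k \<in> folded" "k \<in> D"
  then have "k \<notin> untouched" using untouched_inter_D by auto
  with \<open>k \<in> folded\<close> obtain m where "m \<in> D'" "m \<notin> untouched" "k = m - 1"
    unfolding folded_def by auto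
  then show "Suc k \<in> D'" using D'_not_untouched(2) by auto
qed

lemma folded_cases: "k \<in> folded \<Longrightarrow> k \<in> D' \<inter> untouched \<or> (k \<in> D \<and> Suc k \<in> D')"
  using folded_inter_D D'_not_untouched(1) unfolding folded_def by auto

lemma lowered_conflict: "i \<in> (\<lambda>j. j - 1) ` conflicts \<Longrightarrow> i \<in> untouched \<and> Suc i \<in> conflicts"
  using lowered_conflicts_subset conflicts_subset_D D_eq_Suc_pred by force

lemma finite_D: "finite D"
  using D_subset finite_B by (rule finite_subset)

lemma finite_D': "finite D'"
  using D'_subset finite_grain_transitions[OF finite_B finite_D] by (rule finite_subset)

lemma moved_subset_B: "moved \<subseteq> B"
  using D_subset lowered_conflicts_subset unfolding moved_def untouched_def by auto

lemma sparse_moved: "sparse moved"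
  unfolding sparse_def
proof (intro ballI notI)
  fix k assume "k \<in> moved" "Suc k \<in> moved"
  then consider "k \<in> D" "Suc k \<in> D"
    | "k \<in> D" "Suc k \<in> untouched"
    | "Suc k \<in> conflicts" "Suc k \<notin> conflicts"
    | "Suc k \<in> conflicts" "Suc k \<in> untouched"
    unfolding moved_def using lowered_conflict by blast
  then show False
    using sparse_D conflicts_subset_D unfolding sparse_def untouched_def by cases auto
qed

lemma card_moved_le: "card moved \<le> card D"
proof -
  have "moved = (\<lambda>j. if j \<in> conflicts then j - 1 else j) ` D"
    using conflicts_subset_D unfolding moved_def by auto
  then show ?thesis by (metis card_image_le finite_D)
qed

lemma trimmed_subset_B: "trimmed \<subseteq> B"
  using folded_subset_B unfolding trimmed_def by auto

lemma sparse_trimmed: "sparse trimmed"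
  unfolding sparse_def
proof (intro ballI notI)
  fix k assume k: "k \<in> trimmed" "Suc k \<in> trimmed"
  then have "k \<notin> (\<lambda>j. j - 1) ` conflicts" unfolding trimmed_def by auto
  moreover have "k \<in> D' \<inter> untouched \<Longrightarrow> Suc k \<in> D \<Longrightarrow> Suc (Suc k) \<in> D' \<Longrightarrow> Suc k \<in> conflicts"
    unfolding conflicts_def by auto
  ultimately have "\<not> (k \<in> D' \<inter> untouched \<and> Suc k \<in> D \<and> Suc (Suc k) \<in> D')"
    by (metis diff_Suc_1 imageI)
  with k show False
    using folded_cases sparse_D sparse_D' unfolding trimmed_def sparse_def untouched_def by blast
qed

lemma card_trimmed_le: "card trimmed \<le> card D'"
proof -
  have "folded = (\<lambda>k. if k \<in> untouched then k else k - 1) ` D'"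
    unfolding folded_def by auto
  then have "card folded \<le> card D'" by (metis card_image_le finite_D')
  moreover have "card trimmed \<le> card folded"
    using folded_subset_B finite_B unfolding trimmed_def by (meson Diff_subset card_mono finite_subset)
  ultimately show ?thesis by linarith
qed

lemma conflicts_recovered: "{e\<in>trimmed. e - 1 \<in> moved} = conflicts"
proof (intro set_eqI iffI)
  fix e assume "e \<in> {e\<in>trimmed. e - 1 \<in> moved}"
  then have e: "e \<in> folded" "e \<notin> (\<lambda>j. j - 1) ` conflicts" "e - 1 \<in> moved"
    unfolding trimmed_def by auto
  have e_Suc: "e = Suc (e - 1)" using e(1) folded_subset_B zero_notin_B by (cases e) auto
  show "e \<in> conflicts"
  proof (cases "e - 1 \<in> (\<lambda>j. j - 1) ` conflicts")
    case True
    then obtain j where "j \<in> conflicts" "e - 1 = j - 1" by auto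
    with e_Suc D_eq_Suc_pred conflicts_subset_D show ?thesis by (metis subsetD)
  next
    case False
    then have "e - 1 \<in> D" using e(3) unfolding moved_def by auto
    moreover have "e \<notin> D" using calculation e_Suc sparse_D unfolding sparse_def by metis
    ultimately have "e \<in> D' \<inter> untouched"
      using e(1) D'_not_untouched unfolding folded_def by auto
    then show ?thesis
      using \<open>e - 1 \<in> D\<close> e_Suc unfolding conflicts_def untouched_def by (metis DiffD2 IntD2 imageI)
  qed
next
  fix e assume e: "e \<in> conflicts"
  then have "e \<in> D" "Suc e \<in> D'" unfolding conflicts_def by auto
  then have "e \<in> folded"
    using untouched_inter_D unfolding folded_def untouched_def by force
  moreover have "e \<notin> (\<lambda>j. j - 1) ` conflicts"
  proof
    assume "e \<in> (\<lambda>j. j - 1) ` conflicts"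
    then obtain j where "j \<in> conflicts" "e = j - 1" by auto
    then have "j \<in> D" "j = Suc e" using conflicts_subset_D D_eq_Suc_pred by auto
    with \<open>e \<in> D\<close> sparse_D show False unfolding sparse_def by auto
  qed
  moreover have "e - 1 \<in> moved" using e unfolding moved_def by auto
  ultimately show "e \<in> {e\<in>trimmed. e - 1 \<in> moved}" unfolding trimmed_def by auto
qed

lemma decode_encode: "decode B (encode B (D, D')) = (D, D')"
proof -
  have D: "(moved - (\<lambda>j. j - 1) ` conflicts) \<union> conflicts = D"
    using conflicts_subset_D lowered_conflicts_subset untouched_inter_D
    unfolding moved_def by auto
  have F: "trimmed \<union> (\<lambda>j. j - 1) ` conflicts = folded"
    using lowered_conflicts_subset unfolding trimmed_def folded_def by auto
  have D': "(folded \<inter> untouched) \<union> Suc ` (folded \<inter> D) = D'"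
  proof (intro set_eqI iffI)
    fix k assume "k \<in> (folded \<inter> untouched) \<union> Suc ` (folded \<inter> D)"
    then show "k \<in> D'"
      using folded_inter_D D'_not_untouched untouched_inter_D unfolding folded_def by auto
  next
    fix k assume k: "k \<in> D'"
    show "k \<in> (folded \<inter> untouched) \<union> Suc ` (folded \<inter> D)"
    proof (cases "k \<in> untouched")
      case True
      with k show ?thesis unfolding folded_def by auto
    next
      case False
      with k have "k - 1 \<in> folded \<inter> D" "k = Suc (k - 1)"
        using D'_not_untouched unfolding folded_def by auto
      then show ?thesis by blast
    qed
  qed
  show ?thesis
    unfolding encode_eq decode_def Let_def prod.case conflicts_recovered D F
    using D' by (simp add: untouched_def)
qed

end

lemma sum_card_sparse_subsets_grain_transitions_le:
  assumes "finite B" "0 \<notin> B"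
  shows "(\<Sum>D\<in>sparse_subsets t B. card (sparse_subsets t (grain_transitions B D)))
           \<le> card (sparse_subsets t B) ^ 2"
proof -
  let ?S = "sparse_subsets t B"
  let ?P = "SIGMA D:?S. sparse_subsets t (grain_transitions B D)"
  have encode_props: "decode B (encode B p) = p \<and> encode B p \<in> ?S \<times> ?S" if "p \<in> ?P" for p
  proof -
    obtain D D' where p: "p = (D, D')" and D: "D \<in> ?S"
      and D': "D' \<in> sparse_subsets t (grain_transitions B D)"
      using \<open>p \<in> ?P\<close> by auto
    then interpret pattern_pair B D D'
      using assms by unfold_locales (auto simp: sparse_subsets_def)
    show ?thesis
      using D D' decode_encode moved_subset_B sparse_moved card_moved_le
        trimmed_subset_B sparse_trimmed card_trimmed_le
      unfolding p encode_eq sparse_subsets_def by auto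
  qed
  have fin: "finite (sparse_subsets t (grain_transitions B D))" if "D \<in> ?S" for D
    using that by (intro finite_sparse_subsets finite_grain_transitions assms(1))
      (auto simp: sparse_subsets_def intro: finite_subset[OF _ assms(1)])
  have "(\<Sum>D\<in>?S. card (sparse_subsets t (grain_transitions B D))) = card ?P"
    using fin by (simp add: card_SigmaI finite_sparse_subsets assms(1))
  also have "\<dots> \<le> card (?S \<times> ?S)"
  proof (rule card_inj_on_le)
    show "inj_on (encode B) ?P"
      by (rule inj_on_inverseI[of _ "decode B"]) (use encode_props in blast)
    show "encode B ` ?P \<subseteq> ?S \<times> ?S" using encode_props by blast
  qed (simp add: finite_sparse_subsets assms(1))
  finally show ?thesis by (simp add: card_cartesian_product power2_eq_square)
qed

definition transitions :: "bool list \<Rightarrow> nat set" where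
  "transitions x = {j\<in>{2..length x}. x ! (j - 2) \<noteq> x ! (j - 1)}"

lemma transitions_subset: "transitions x \<subseteq> {2..length x}"
  unfolding transitions_def by auto

lemma finite_transitions: "finite (transitions x)"
  using transitions_subset by (rule finite_subset) simp

lemma grain_pattern_iff: "grain_pattern n E \<longleftrightarrow> E \<subseteq> {2..n} \<and> sparse E"
  unfolding grain_pattern_def sparse_def ..

lemma length_phi [simp]: "length (phi n E x) = n"
  unfolding phi_def by simp

lemma nth_phi: "i < n \<Longrightarrow> phi n E x ! i = (if Suc i \<in> E then x ! (i - 1) else x ! i)"
  unfolding phi_def by (simp del: upt_Suc)

lemma phi_Int_transitions:
  assumes "E \<subseteq> {2..length x}"
  shows "phi n (E \<inter> transitions x) x = phi n E x"
proof (rule nth_equalityI)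
  fix i assume "i < length (phi n (E \<inter> transitions x) x)"
  then have i: "i < n" by simp
  show "phi n (E \<inter> transitions x) x ! i = phi n E x ! i"
  proof (cases "Suc i \<in> E")
    case True
    then have "i \<ge> 1" "Suc i - 2 = i - 1" "Suc i \<le> length x" using assms by auto
    with True show ?thesis unfolding nth_phi[OF i] transitions_def by auto
  qed (simp add: nth_phi[OF i])
qed simp

lemma nth_phi_ne_iff:
  assumes "D \<subseteq> transitions x" "i < n"
  shows "phi n D x ! i \<noteq> x ! i \<longleftrightarrow> Suc i \<in> D"
proof (cases "Suc i \<in> D")
  case True
  with assms(1) have "x ! (i - 1) \<noteq> x ! i" unfolding transitions_def by auto
  with True show ?thesis by (simp add: nth_phi[OF assms(2)])
qed (simp add: nth_phi[OF assms(2)])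

lemma inj_on_phi:
  assumes "length x = n"
  shows "inj_on (\<lambda>D. phi n D x) (Pow (transitions x))"
proof (rule inj_onI, rule set_eqI)
  fix D1 D2 j
  assume D: "D1 \<in> Pow (transitions x)" "D2 \<in> Pow (transitions x)" and eq: "phi n D1 x = phi n D2 x"
  show "j \<in> D1 \<longleftrightarrow> j \<in> D2"
  proof (cases "j \<in> {2..n}")
    case True
    then have "j - 1 < n" "Suc (j - 1) = j" by auto
    then show ?thesis using nth_phi_ne_iff[of D1 x "j - 1" n] nth_phi_ne_iff[of D2 x "j - 1" n] D eq
      by auto
  next
    case False
    then show ?thesis using D transitions_subset[of x] assms by auto
  qed
qed

lemma Phi_eq_image:
  assumes "length x = n"
  shows "Phi n t x = (\<lambda>D. phi n D x) ` sparse_subsets t (transitions x)"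
proof (intro set_eqI iffI)
  fix y assume "y \<in> Phi n t x"
  then obtain E where E: "E \<subseteq> {2..n}" "sparse E" "card E \<le> t" "y = phi n E x"
    unfolding Phi_def grain_patterns_def grain_pattern_iff by auto
  then have "card (E \<inter> transitions x) \<le> t"
    by (meson card_mono finite_atLeastAtMost finite_subset inf_le1 order_trans)
  with E have "E \<inter> transitions x \<in> sparse_subsets t (transitions x)"
    unfolding sparse_subsets_def sparse_def by auto
  moreover have "y = phi n (E \<inter> transitions x) x"
    using phi_Int_transitions E(1,4) assms by simp
  ultimately show "y \<in> (\<lambda>D. phi n D x) ` sparse_subsets t (transitions x)" by blast
next
  fix y assume "y \<in> (\<lambda>D. phi n D x) ` sparse_subsets t (transitions x)"
  then obtain D where "D \<in> sparse_subsets t (transitions x)" "y = phi n D x" by auto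
  then show "y \<in> Phi n t x"
    using transitions_subset[of x] assms
    unfolding Phi_def grain_patterns_def grain_pattern_iff sparse_subsets_def by auto
qed

lemma card_Phi:
  "length x = n \<Longrightarrow> card (Phi n t x) = card (sparse_subsets t (transitions x))"
  unfolding Phi_eq_image
  by (rule card_image, rule inj_on_subset[OF inj_on_phi]) (auto simp: sparse_subsets_def)

lemma finite_Phi: "length x = n \<Longrightarrow> finite (Phi n t x)"
  by (simp add: Phi_eq_image finite_sparse_subsets finite_transitions)

lemma transitions_phi_subset:
  assumes "length x = n" "D \<subseteq> transitions x" "sparse D"
  shows "transitions (phi n D x) \<subseteq> grain_transitions (transitions x) D"
proof
  fix j assume j: "j \<in> transitions (phi n D x)"
  then obtain k where k: "j = Suc (Suc k)" "Suc k < n"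
    unfolding transitions_def by (auto dest!: le_Suc_ex)
  have in_B: "Suc (Suc k) \<in> transitions x \<longleftrightarrow> x ! k \<noteq> x ! Suc k"
    using k assms(1) by (simp add: transitions_def)
  have "phi n D x ! k \<noteq> phi n D x ! Suc k"
    using j k by (simp add: transitions_def)
  moreover have "Suc k \<in> D \<Longrightarrow> x ! (k - 1) \<noteq> x ! k"
    using assms(2) by (auto simp: transitions_def)
  moreover have "\<not> (Suc k \<in> D \<and> Suc (Suc k) \<in> D)"
    using assms(3) unfolding sparse_def by blast
  ultimately show "j \<in> grain_transitions (transitions x) D"
    unfolding grain_transitions_def nth_phi[OF k(2)] nth_phi[OF Suc_lessD[OF k(2)]] k(1)
    by (cases "x ! k"; cases "x ! Suc k"; cases "x ! (k - 1)")
      (auto simp: in_B inj_image_mem_iff split: if_splits)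
qed

lemma one_le_sum_inverse_card_Phi:
  assumes "length x = n"
  shows "1 \<le> (\<Sum>y\<in>Phi n t x. 1 / real (card (Phi n t y)))"
proof -
  let ?S = "sparse_subsets t (transitions x)"
  define a where "a D = real (card (sparse_subsets t (transitions (phi n D x))))" for D
  have "inj_on (\<lambda>D. phi n D x) ?S"
    by (rule inj_on_subset[OF inj_on_phi[OF assms]]) (auto simp: sparse_subsets_def)
  then have sum_eq: "(\<Sum>y\<in>Phi n t x. 1 / real (card (Phi n t y))) = (\<Sum>D\<in>?S. 1 / a D)"
    by (simp add: Phi_eq_image[OF assms] sum.reindex card_Phi a_def)
  have a_le: "a D \<le> real (card (sparse_subsets t (grain_transitions (transitions x) D)))"
    if "D \<in> ?S" for D
  proof -
    have "D \<subseteq> transitions x" "sparse D" "finite D"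
      using that finite_transitions by (auto simp: sparse_subsets_def intro: finite_subset)
    then show ?thesis unfolding a_def
      by (simp add: card_sparse_subsets_mono finite_grain_transitions finite_transitions
          transitions_phi_subset[OF assms])
  qed
  have "1 \<le> (\<Sum>D\<in>?S. 1 / a D)"
  proof (rule one_le_sum_inverse)
    show "finite ?S" by (simp add: finite_sparse_subsets finite_transitions)
    show "?S \<noteq> {}" using card_sparse_subsets_pos[OF finite_transitions, of t x] by auto
    show "a D > 0" for D by (simp add: a_def card_sparse_subsets_pos finite_transitions)
    have "sum a ?S \<le> (\<Sum>D\<in>?S. real (card (sparse_subsets t (grain_transitions (transitions x) D))))"
      by (rule sum_mono) (rule a_le)
    also have "\<dots> \<le> real (card ?S) ^ 2"
      using sum_card_sparse_subsets_grain_transitions_le[OF finite_transitions]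
        transitions_subset[of x] by (simp flip: of_nat_sum of_nat_power) force
    finally show "sum a ?S \<le> real (card ?S) ^ 2" .
  qed
  then show ?thesis by (simp add: sum_eq)
qed

lemma finite_words: "finite (words n)"
  using finite_lists_length_eq[of "UNIV :: bool set" n] by (simp add: words_def)

lemma card_le_sum_inverse_card_Phi:
  assumes "grain_correcting n t C"
  shows "real (card C) \<le> (\<Sum>x\<in>words n. 1 / real (card (Phi n t x)))"
proof -
  define f where "f y = 1 / real (card (Phi n t y))" for y
  have C: "C \<subseteq> words n" using assms unfolding grain_correcting_def by blast
  then have len: "length x = n" if "x \<in> C" for x using that by (auto simp: words_def)
  have disjoint: "Phi n t x1 \<inter> Phi n t x2 = {}" if "x1 \<in> C" "x2 \<in> C" "x1 \<noteq> x2" for x1 x2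
    using assms that unfolding grain_correcting_def confusable_def by blast
  have "real (card C) = (\<Sum>x\<in>C. 1)" by simp
  also have "\<dots> \<le> (\<Sum>x\<in>C. \<Sum>y\<in>Phi n t x. f y)"
    by (rule sum_mono) (simp add: f_def one_le_sum_inverse_card_Phi len)
  also have "\<dots> = (\<Sum>y\<in>(\<Union>x\<in>C. Phi n t x). f y)"
    using finite_subset[OF C finite_words] by (simp add: sum.UNION_disjoint finite_Phi len disjoint)
  also have "\<dots> \<le> (\<Sum>y\<in>words n. f y)"
    by (rule sum_mono2[OF finite_words]) (auto simp: Phi_def words_def f_def)
  finally show ?thesis unfolding f_def .
qed

theorem theorem3p2:
  fixes n t :: nat
  assumes "n \<ge> 1" and "t \<in> {1, 2, 3}"
  shows "real (M n t) \<le> (\<Sum>x\<in>words n. 1 / real (card (Phi n t x)))"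
proof -
  let ?sizes = "{card C | C. grain_correcting n t C}"
  have "?sizes \<subseteq> {..card (words n)}"
    using finite_words by (auto simp: grain_correcting_def intro: card_mono)
  then have "finite ?sizes" by (rule finite_subset) simp
  moreover have "?sizes \<noteq> {}"
    unfolding grain_correcting_def by blast
  ultimately obtain C where "grain_correcting n t C" "M n t = card C"
    using Max_in[of ?sizes] unfolding M_def by auto
  then show ?thesis using card_le_sum_inverse_card_Phi by simp
qed

end
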